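(* Let $V\subset\mathbb{R}^n$ be a singular irreducible central real algebraic variety. Then the ring $\mathcal{R}^0(V)$ of continuous rational functions on $V$ has the weak substitution property on points over $\mathbb{R}[V]$: every ring homomorphism $\mathbb{R}[V]\to\mathbb{R}$ admits one and only one extension to a ring homomorphism $\mathcal{R}^0(V)\to\mathbb{R}$.
   Context: $V$ is central if its non-singular points are dense in $V$ for the Euclidean topology. $\mathcal{R}^0(V)$ consists of the continuous functions $V\to\mathbb{R}$ whose restriction to some non-empty Zariski open subset of $V$ is regular. *)

theory Defs
  imports "HOL-Analysis.Analysis"
begin

inductive_set poly_fun :: "((real^'n) \<Rightarrow> real) set" where
  const: "(\<lambda>x. c) \<in> poly_fun"
| coord: "(\<lambda>x. x $ i) \<in> poly_fun"
| add: "p \<in> poly_fun \<Longrightarrow> q \<in> poly_fun \<Longrightarrow> (\<lambda>x. p x + q x) \<in> poly_fun"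
| mult: "p \<in> poly_fun \<Longrightarrow> q \<in> poly_fun \<Longrightarrow> (\<lambda>x. p x * q x) \<in> poly_fun"

definition zero_set :: "((real^'n) \<Rightarrow> real) set \<Rightarrow> (real^'n) set" where
  "zero_set F = {x. \<forall>f\<in>F. f x = 0}"

definition algebraic_set :: "(real^'n) set \<Rightarrow> bool" where
  "algebraic_set V \<longleftrightarrow> (\<exists>F. F \<subseteq> poly_fun \<and> V = zero_set F)"

definition irreducible_alg :: "(real^'n) set \<Rightarrow> bool" where
  "irreducible_alg V \<longleftrightarrow> algebraic_set V \<and> V \<noteq> {} \<and>
     (\<forall>A B. algebraic_set A \<longrightarrow> algebraic_set B \<longrightarrow> V = A \<union> B \<longrightarrow> V = A \<or> V = B)"

definition alg_dim :: "(real^'n) set \<Rightarrow> nat" where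
  "alg_dim V = Sup {k. \<exists>C :: nat \<Rightarrow> (real^'n) set.
      (\<forall>i\<le>k. irreducible_alg (C i)) \<and> (\<forall>i<k. C i \<subset> C (Suc i)) \<and> C k \<subseteq> V}"

definition vanishing_ideal :: "(real^'n) set \<Rightarrow> ((real^'n) \<Rightarrow> real) set" where
  "vanishing_ideal V = {f \<in> poly_fun. \<forall>x\<in>V. f x = 0}"

text \<open>Nonsingular point: the gradients at x of the polynomials vanishing on V
  span a space of dimension n - dim V (rank of the Jacobian of generators of I(V)).\<close>
definition nonsingular_point :: "(real^'n) set \<Rightarrow> real^'n \<Rightarrow> bool" where
  "nonsingular_point V x \<longleftrightarrow> x \<in> V \<and>
     dim {g :: real^'n. \<exists>f\<in>vanishing_ideal V. (f has_derivative (\<lambda>h. g \<bullet> h)) (at x)}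
       = CARD('n) - alg_dim V"

definition singular_variety :: "(real^'n) set \<Rightarrow> bool" where
  "singular_variety V \<longleftrightarrow> (\<exists>x\<in>V. \<not> nonsingular_point V x)"

definition central :: "(real^'n) set \<Rightarrow> bool" where
  "central V \<longleftrightarrow> V \<subseteq> closure {x. nonsingular_point V x}"

text \<open>Functions on V are represented extensionally: value 0 outside V.\<close>
definition restrictV :: "(real^'n) set \<Rightarrow> ((real^'n) \<Rightarrow> real) \<Rightarrow> ((real^'n) \<Rightarrow> real)" where
  "restrictV V f = (\<lambda>x. if x \<in> V then f x else 0)"

definition coord_ring :: "(real^'n) set \<Rightarrow> ((real^'n) \<Rightarrow> real) set" where
  "coord_ring V = {restrictV V p | p. p \<in> poly_fun}"

definition cont_rational :: "(real^'n) set \<Rightarrow> ((real^'n) \<Rightarrow> real) set" where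
  "cont_rational V = {f. continuous_on V f \<and> (\<forall>x. x \<notin> V \<longrightarrow> f x = 0) \<and>
     (\<exists>W p q. algebraic_set W \<and> V - W \<noteq> {} \<and> p \<in> poly_fun \<and> q \<in> poly_fun \<and>
        (\<forall>x\<in>V - W. q x \<noteq> 0 \<and> f x = p x / q x))}"

definition ring_hom_on :: "(real^'n) set \<Rightarrow> ((real^'n) \<Rightarrow> real) set \<Rightarrow> (((real^'n) \<Rightarrow> real) \<Rightarrow> real) \<Rightarrow> bool" where
  "ring_hom_on V A \<phi> \<longleftrightarrow>
     (\<forall>f\<in>A. \<forall>g\<in>A. \<phi> (\<lambda>x. f x + g x) = \<phi> f + \<phi> g \<and> \<phi> (\<lambda>x. f x * g x) = \<phi> f * \<phi> g) \<and>
     \<phi> (restrictV V (\<lambda>x. 1)) = 1"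

end

theory Submission
  imports Defs
begin

text \<open>
  A ring homomorphism from the coordinate ring to \<open>\<real>\<close> fixes the constants, because \<open>\<real>\<close> has no
  ring endomorphism other than the identity; hence it is evaluation at the point \<open>a\<close> of \<open>V\<close> whose
  coordinates are the images of the coordinate functions. Evaluation at \<open>a\<close> is an extension.
  Conversely, if an extension \<open>\<psi>\<close> had \<open>\<psi> f = t \<noteq> f a\<close>, then \<open>(f - t)\<^sup>2 + |x - a|\<^sup>2\<close> would be a
  continuous rational function without zeros on \<open>V\<close>, hence invertible in \<open>\<R>\<^sup>0(V)\<close>, yet killed by \<open>\<psi>\<close>.
\<close>

lemma real_ring_hom_eq_id:
  fixes k :: "real \<Rightarrow> real"
  assumes add: "\<And>c d. k (c + d) = k c + k d"
    and mult: "\<And>c d. k (c * d) = k c * k d"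
    and one: "k 1 = 1"
  shows "k c = c"
proof -
  have k_diff: "k (y - x) = k y - k x" for x y
    using add[of x "y - x"] by simp
  have k_of_int: "k (of_int m) = of_int m" for m
  proof (induction m rule: int_induct[where k = 0])
    case (step1 i) then show ?case using add[of "of_int i" 1] one by simp
  next
    case (step2 i) then show ?case using k_diff[where x = 1 and y = "of_int i"] one by simp
  qed (use k_diff[of 0 0] in simp)
  have k_rat: "k r = r" if r_rat: "r \<in> \<rat>" for r
  proof -
    obtain a b where b: "b > 0" and r: "r = of_int a / of_int b"
      using Rats_cases'[OF r_rat] by metis
    have "k r * of_int b = k (r * of_int b)" using mult k_of_int by simp
    also have "\<dots> = r * of_int b" using r b k_of_int by simp
    finally show ?thesis using b by simp
  qed
  have k_mono: "k x \<le> k y" if "x \<le> y" for x y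
  proof -
    have "y - x = sqrt (y - x) * sqrt (y - x)" using that by simp
    then have "k (y - x) = k (sqrt (y - x)) * k (sqrt (y - x))" by (metis mult)
    then show ?thesis
      using k_diff[where x = x and y = y] zero_le_square[of "k (sqrt (y - x))"] by linarith
  qed
  show ?thesis
  proof (rule linorder_cases[of "k c" c])
    assume "k c < c"
    then obtain r where "r \<in> \<rat>" "k c < r" "r < c" using Rats_dense_in_real by blast
    then show ?thesis using k_mono[of r c] k_rat by simp
  next
    assume "c < k c"
    then obtain r where "r \<in> \<rat>" "c < r" "r < k c" using Rats_dense_in_real by blast
    then show ?thesis using k_mono[of c r] k_rat by simp
  qed
qed

lemma poly_fun_continuous_on: "p \<in> poly_fun \<Longrightarrow> continuous_on S p"
  by (induction rule: poly_fun.induct) (auto intro!: continuous_intros)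

lemma poly_fun_diff:
  assumes "p \<in> poly_fun" "q \<in> poly_fun"
  shows "(\<lambda>x. p x - q x) \<in> poly_fun"
proof -
  have "(\<lambda>x. p x + (- 1) * q x) \<in> poly_fun"
    using assms by (intro poly_fun.intros)
  then show ?thesis by simp
qed

lemma poly_fun_sum:
  "finite S \<Longrightarrow> (\<And>i. i \<in> S \<Longrightarrow> h i \<in> poly_fun) \<Longrightarrow> (\<lambda>x. \<Sum>i\<in>S. h i x) \<in> poly_fun"
proof (induction S rule: finite_induct)
  case empty then show ?case using poly_fun.const[of 0] by simp
next
  case (insert j S)
  then have "(\<lambda>x. h j x + (\<Sum>i\<in>S. h i x)) \<in> poly_fun" by (intro poly_fun.add) auto
  then show ?case using insert by simp
qed

lemma poly_fun_inner_diff_self: "(\<lambda>x. (x - a) \<bullet> (x - a)) \<in> poly_fun"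
proof -
  have "(\<lambda>x. x $ i - a $ i) \<in> poly_fun" for i
    by (intro poly_fun_diff poly_fun.intros)
  then have "(\<lambda>x. \<Sum>i\<in>UNIV. (x $ i - a $ i) * (x $ i - a $ i)) \<in> poly_fun"
    by (intro poly_fun_sum poly_fun.mult) auto
  then show ?thesis by (simp add: inner_vec_def)
qed

lemma algebraic_set_empty: "algebraic_set {}"
proof -
  have "{} = zero_set {\<lambda>x. 1}" by (simp add: zero_set_def)
  then show ?thesis unfolding algebraic_set_def by (metis empty_subsetI insert_subset poly_fun.const)
qed

lemma algebraic_set_Un:
  assumes "algebraic_set A" "algebraic_set B"
  shows "algebraic_set (A \<union> B)"
proof -
  obtain F G where F: "F \<subseteq> poly_fun" "A = zero_set F" and G: "G \<subseteq> poly_fun" "B = zero_set G"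
    using assms unfolding algebraic_set_def by blast
  define H where "H = {(\<lambda>x. f x * g x) | f g. f \<in> F \<and> g \<in> G}"
  have "H \<subseteq> poly_fun" using F G by (auto simp: H_def intro: poly_fun.mult)
  moreover have "A \<union> B = zero_set H"
  proof
    show "A \<union> B \<subseteq> zero_set H" using F G by (auto simp: H_def zero_set_def)
    show "zero_set H \<subseteq> A \<union> B"
    proof
      fix x assume x: "x \<in> zero_set H"
      show "x \<in> A \<union> B"
      proof (rule ccontr)
        assume "x \<notin> A \<union> B"
        then obtain f g where "f \<in> F" "g \<in> G" "f x * g x \<noteq> 0"
          using F G by (auto simp: zero_set_def)
        moreover from this have "(\<lambda>x. f x * g x) \<in> H" by (auto simp: H_def)
        ultimately show False using x by (auto simp: zero_set_def)
      qed
    qed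
  qed
  ultimately show ?thesis unfolding algebraic_set_def by blast
qed

lemma algebraic_set_Int:
  assumes "algebraic_set A" "algebraic_set B"
  shows "algebraic_set (A \<inter> B)"
proof -
  obtain F G where F: "F \<subseteq> poly_fun" "A = zero_set F" and G: "G \<subseteq> poly_fun" "B = zero_set G"
    using assms unfolding algebraic_set_def by blast
  then have "A \<inter> B = zero_set (F \<union> G)" "F \<union> G \<subseteq> poly_fun"
    by (auto simp: zero_set_def)
  then show ?thesis unfolding algebraic_set_def by blast
qed

lemma irreducible_alg_Diff_Un_nonempty:
  assumes irr: "irreducible_alg V" and "algebraic_set W1" "algebraic_set W2"
    and "V - W1 \<noteq> {}" "V - W2 \<noteq> {}"
  shows "V - (W1 \<union> W2) \<noteq> {}"
proof
  assume "V - (W1 \<union> W2) = {}"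
  then have "V = (V \<inter> W1) \<union> (V \<inter> W2)" by blast
  moreover have "algebraic_set (V \<inter> W1)" "algebraic_set (V \<inter> W2)"
    using assms algebraic_set_Int irreducible_alg_def by blast+
  ultimately have "V = V \<inter> W1 \<or> V = V \<inter> W2"
    using irr unfolding irreducible_alg_def by blast
  then show False using assms by blast
qed

lemma cont_rationalI:
  assumes "continuous_on V f" "\<And>x. x \<notin> V \<Longrightarrow> f x = 0"
    and "algebraic_set W" "V - W \<noteq> {}" "p \<in> poly_fun" "q \<in> poly_fun"
    and "\<And>x. x \<in> V - W \<Longrightarrow> q x \<noteq> 0 \<and> f x = p x / q x"
  shows "f \<in> cont_rational V"
  unfolding cont_rational_def using assms by blast

lemma cont_rational_common_domain:
  assumes "irreducible_alg V" "f \<in> cont_rational V" "g \<in> cont_rational V"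
  obtains W p1 q1 p2 q2 where "algebraic_set W" "V - W \<noteq> {}"
    and "p1 \<in> poly_fun" "q1 \<in> poly_fun" "p2 \<in> poly_fun" "q2 \<in> poly_fun"
    and "\<And>x. x \<in> V - W \<Longrightarrow> q1 x \<noteq> 0 \<and> f x = p1 x / q1 x \<and> q2 x \<noteq> 0 \<and> g x = p2 x / q2 x"
proof -
  obtain W1 p1 q1 where 1: "algebraic_set W1" "V - W1 \<noteq> {}" "p1 \<in> poly_fun" "q1 \<in> poly_fun"
      "\<forall>x\<in>V - W1. q1 x \<noteq> 0 \<and> f x = p1 x / q1 x"
    using assms(2) unfolding cont_rational_def by blast
  obtain W2 p2 q2 where 2: "algebraic_set W2" "V - W2 \<noteq> {}" "p2 \<in> poly_fun" "q2 \<in> poly_fun"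
      "\<forall>x\<in>V - W2. q2 x \<noteq> 0 \<and> g x = p2 x / q2 x"
    using assms(3) unfolding cont_rational_def by blast
  show ?thesis
    using that[of "W1 \<union> W2" p1 q1 p2 q2] 1 2 algebraic_set_Un
      irreducible_alg_Diff_Un_nonempty[OF assms(1) 1(1) 2(1) 1(2) 2(2)]
    by blast
qed

lemma cont_rational_add:
  assumes irr: "irreducible_alg V" and f: "f \<in> cont_rational V" and g: "g \<in> cont_rational V"
  shows "(\<lambda>x. f x + g x) \<in> cont_rational V"
proof -
  obtain W p1 q1 p2 q2 where W: "algebraic_set W" "V - W \<noteq> {}"
    and P: "p1 \<in> poly_fun" "q1 \<in> poly_fun" "p2 \<in> poly_fun" "q2 \<in> poly_fun"
    and fg: "\<And>x. x \<in> V - W \<Longrightarrow> q1 x \<noteq> 0 \<and> f x = p1 x / q1 x \<and> q2 x \<noteq> 0 \<and> g x = p2 x / q2 x"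
    using cont_rational_common_domain[OF assms] by blast
  show ?thesis
  proof (rule cont_rationalI[OF _ _ W])
    show "(\<lambda>x. p1 x * q2 x + p2 x * q1 x) \<in> poly_fun" "(\<lambda>x. q1 x * q2 x) \<in> poly_fun"
      using P by (auto intro: poly_fun.intros)
  qed (use f g fg in \<open>auto simp: cont_rational_def field_simps intro!: continuous_intros\<close>)
qed

lemma cont_rational_mult:
  assumes irr: "irreducible_alg V" and f: "f \<in> cont_rational V" and g: "g \<in> cont_rational V"
  shows "(\<lambda>x. f x * g x) \<in> cont_rational V"
proof -
  obtain W p1 q1 p2 q2 where W: "algebraic_set W" "V - W \<noteq> {}"
    and P: "p1 \<in> poly_fun" "q1 \<in> poly_fun" "p2 \<in> poly_fun" "q2 \<in> poly_fun"
    and fg: "\<And>x. x \<in> V - W \<Longrightarrow> q1 x \<noteq> 0 \<and> f x = p1 x / q1 x \<and> q2 x \<noteq> 0 \<and> g x = p2 x / q2 x"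
    using cont_rational_common_domain[OF assms] by blast
  show ?thesis
  proof (rule cont_rationalI[OF _ _ W])
    show "(\<lambda>x. p1 x * p2 x) \<in> poly_fun" "(\<lambda>x. q1 x * q2 x) \<in> poly_fun"
      using P by (auto intro: poly_fun.intros)
  qed (use f g fg in \<open>auto simp: cont_rational_def intro!: continuous_intros\<close>)
qed

lemma cont_rational_inverse:
  assumes g: "g \<in> cont_rational V" and nz: "\<And>x. x \<in> V \<Longrightarrow> g x \<noteq> 0"
  shows "restrictV V (\<lambda>x. 1 / g x) \<in> cont_rational V"
proof -
  obtain W p q where W: "algebraic_set W" "V - W \<noteq> {}" and P: "p \<in> poly_fun" "q \<in> poly_fun"
    and pq: "\<forall>x\<in>V - W. q x \<noteq> 0 \<and> g x = p x / q x"
    using g unfolding cont_rational_def by blast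
  have "continuous_on V (\<lambda>x. 1 / g x)"
    using g nz by (auto simp: cont_rational_def intro!: continuous_intros)
  then have "continuous_on V (restrictV V (\<lambda>x. 1 / g x))"
    by (rule continuous_on_cong[THEN iffD1, rotated 2]) (auto simp: restrictV_def)
  then show ?thesis
  proof (rule cont_rationalI[OF _ _ W P(2) P(1)])
    fix x assume "x \<in> V - W"
    then have "q x \<noteq> 0" "g x = p x / q x" "g x \<noteq> 0" using pq nz by blast+
    then show "p x \<noteq> 0 \<and> restrictV V (\<lambda>x. 1 / g x) x = q x / p x"
      using \<open>x \<in> V - W\<close> by (auto simp: restrictV_def)
  qed (simp add: restrictV_def)
qed

lemma restrictV_poly_fun_in_cont_rational:
  assumes "p \<in> poly_fun" "V \<noteq> {}"
  shows "restrictV V p \<in> cont_rational V"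
proof -
  have "continuous_on V (restrictV V p)"
    using poly_fun_continuous_on[OF assms(1)]
    by (rule continuous_on_cong[THEN iffD1, rotated 2]) (auto simp: restrictV_def)
  then show ?thesis
    by (rule cont_rationalI[OF _ _ algebraic_set_empty _ assms(1) poly_fun.const[of 1]])
      (use assms(2) in \<open>auto simp: restrictV_def\<close>)
qed

lemma coord_ring_hom_is_evaluation:
  assumes alg: "algebraic_set V" and hom: "ring_hom_on V (coord_ring V) \<phi>"
  obtains a where "a \<in> V" "\<And>p. p \<in> poly_fun \<Longrightarrow> \<phi> (restrictV V p) = p a"
proof -
  have in_coord_ring: "restrictV V p \<in> coord_ring V" if "p \<in> poly_fun" for p
    using that by (auto simp: coord_ring_def)
  have hom_add: "\<phi> (restrictV V (\<lambda>x. p x + q x)) = \<phi> (restrictV V p) + \<phi> (restrictV V q)"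
    and hom_mult: "\<phi> (restrictV V (\<lambda>x. p x * q x)) = \<phi> (restrictV V p) * \<phi> (restrictV V q)"
    if "p \<in> poly_fun" "q \<in> poly_fun" for p q
  proof -
    have "restrictV V (\<lambda>x. p x + q x) = (\<lambda>x. restrictV V p x + restrictV V q x)"
      "restrictV V (\<lambda>x. p x * q x) = (\<lambda>x. restrictV V p x * restrictV V q x)"
      by (auto simp: restrictV_def)
    then show "\<phi> (restrictV V (\<lambda>x. p x + q x)) = \<phi> (restrictV V p) + \<phi> (restrictV V q)"
      "\<phi> (restrictV V (\<lambda>x. p x * q x)) = \<phi> (restrictV V p) * \<phi> (restrictV V q)"
      using hom in_coord_ring[OF that(1)] in_coord_ring[OF that(2)]
      unfolding ring_hom_on_def by simp_all
  qed
  have hom_const: "\<phi> (restrictV V (\<lambda>x. c)) = c" for c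
    by (rule real_ring_hom_eq_id[where k = "\<lambda>c. \<phi> (restrictV V (\<lambda>x. c))"])
      (use hom_add[OF poly_fun.const poly_fun.const] hom_mult[OF poly_fun.const poly_fun.const] hom
        in \<open>auto simp: ring_hom_on_def\<close>)
  define a where "a = (\<chi> i. \<phi> (restrictV V (\<lambda>x. x $ i)))"
  have eval: "\<phi> (restrictV V p) = p a" if "p \<in> poly_fun" for p
    using that
    by (induction rule: poly_fun.induct) (simp_all add: hom_const hom_add hom_mult a_def)
  obtain F where F: "F \<subseteq> poly_fun" "V = zero_set F"
    using alg algebraic_set_def by blast
  have "f a = 0" if "f \<in> F" for f
  proof -
    have "restrictV V f = restrictV V (\<lambda>x. 0)"
      using that F by (auto simp: restrictV_def zero_set_def)
    then show ?thesis using eval[of f] hom_const[of 0] that F(1) by auto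
  qed
  then have "a \<in> V" using F(2) by (simp add: zero_set_def)
  then show ?thesis using that eval by blast
qed

lemma ring_hom_on_evaluation:
  assumes "a \<in> V"
  shows "ring_hom_on V A (\<lambda>f. f a)"
  using assms by (simp add: ring_hom_on_def restrictV_def)

lemma ring_hom_on_cont_rational_nonzero:
  assumes hom: "ring_hom_on V (cont_rational V) \<psi>"
    and g: "g \<in> cont_rational V" and nz: "\<And>x. x \<in> V \<Longrightarrow> g x \<noteq> 0"
  shows "\<psi> g \<noteq> 0"
proof
  assume "\<psi> g = 0"
  define h where "h = restrictV V (\<lambda>x. 1 / g x)"
  have "h \<in> cont_rational V" unfolding h_def using g nz by (rule cont_rational_inverse)
  moreover have "(\<lambda>x. g x * h x) = restrictV V (\<lambda>x. 1)"
    using nz by (auto simp: h_def restrictV_def)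
  ultimately have "1 = \<psi> g * \<psi> h"
    using hom g unfolding ring_hom_on_def by metis
  then show False using \<open>\<psi> g = 0\<close> by simp
qed

lemma cont_rational_hom_is_evaluation:
  assumes irr: "irreducible_alg V" and "a \<in> V"
    and hom: "ring_hom_on V (cont_rational V) \<psi>"
    and eval: "\<And>p. p \<in> poly_fun \<Longrightarrow> \<psi> (restrictV V p) = p a"
    and f: "f \<in> cont_rational V"
  shows "\<psi> f = f a"
proof (rule ccontr)
  assume ne: "\<psi> f \<noteq> f a"
  define t where "t = \<psi> f"
  have poly: "restrictV V p \<in> cont_rational V" "\<psi> (restrictV V p) = p a" if "p \<in> poly_fun" for p
    using restrictV_poly_fun_in_cont_rational[OF that] eval[OF that] \<open>a \<in> V\<close> by auto
  define c where "c = restrictV V (\<lambda>x. - t)"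
  define s where "s = restrictV V (\<lambda>x. (x - a) \<bullet> (x - a))"
  define u where "u = (\<lambda>x. f x + c x)"
  define g where "g = (\<lambda>x. u x * u x + s x)"
  have c: "c \<in> cont_rational V" "\<psi> c = - t"
    using poly[OF poly_fun.const] by (auto simp: c_def)
  have s: "s \<in> cont_rational V" "\<psi> s = 0"
    using poly[OF poly_fun_inner_diff_self] by (auto simp: s_def)
  have u: "u \<in> cont_rational V" "\<psi> u = 0"
    using cont_rational_add[OF irr f c(1)] hom f c unfolding u_def t_def ring_hom_on_def by auto
  have "g \<in> cont_rational V" "\<psi> g = 0"
    using cont_rational_add[OF irr cont_rational_mult[OF irr u(1) u(1)] s(1)]
      hom u s cont_rational_mult[OF irr u(1) u(1)]
    unfolding g_def ring_hom_on_def by auto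
  moreover have "g x \<noteq> 0" if "x \<in> V" for x
  proof -
    have g_x: "g x = (f x - t)\<^sup>2 + (x - a) \<bullet> (x - a)"
      using that by (simp add: g_def u_def c_def s_def restrictV_def power2_eq_square)
    show ?thesis
    proof (cases "x = a")
      case True
      then have "(f x - t)\<^sup>2 > 0" using ne by (simp add: t_def)
      then show ?thesis using g_x by (simp add: True)
    next
      case False
      then have "(x - a) \<bullet> (x - a) > 0" by simp
      then show ?thesis using g_x by (metis add_nonneg_pos less_irrefl zero_le_power2)
    qed
  qed
  ultimately show False using ring_hom_on_cont_rational_nonzero[OF hom] by blast
qed

theorem proposition4p2:
  fixes V :: "(real^'n) set" and \<phi> :: "((real^'n) \<Rightarrow> real) \<Rightarrow> real"
  assumes "irreducible_alg V" and "central V" and "singular_variety V"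
    and "ring_hom_on V (coord_ring V) \<phi>"
  shows "(\<exists>\<psi>. ring_hom_on V (cont_rational V) \<psi> \<and> (\<forall>f\<in>coord_ring V. \<psi> f = \<phi> f)) \<and>
         (\<forall>\<psi>1 \<psi>2. ring_hom_on V (cont_rational V) \<psi>1 \<and> (\<forall>f\<in>coord_ring V. \<psi>1 f = \<phi> f) \<and>
                  ring_hom_on V (cont_rational V) \<psi>2 \<and> (\<forall>f\<in>coord_ring V. \<psi>2 f = \<phi> f)
                  \<longrightarrow> (\<forall>f\<in>cont_rational V. \<psi>1 f = \<psi>2 f))"
proof -
  obtain a where "a \<in> V" and \<phi>_eval: "\<And>p. p \<in> poly_fun \<Longrightarrow> \<phi> (restrictV V p) = p a"
    using coord_ring_hom_is_evaluation assms(1,4) irreducible_alg_def by metis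
  have extension_is_evaluation: "\<psi> f = f a"
    if "ring_hom_on V (cont_rational V) \<psi>" "\<forall>f\<in>coord_ring V. \<psi> f = \<phi> f" "f \<in> cont_rational V"
    for \<psi> f
  proof (rule cont_rational_hom_is_evaluation[OF assms(1) \<open>a \<in> V\<close> that(1) _ that(3)])
    fix p :: "real^'n \<Rightarrow> real" assume "p \<in> poly_fun"
    then show "\<psi> (restrictV V p) = p a"
      using that(2) \<phi>_eval by (auto simp: coord_ring_def)
  qed
  have "\<forall>f\<in>coord_ring V. f a = \<phi> f"
    using \<open>a \<in> V\<close> \<phi>_eval by (auto simp: coord_ring_def restrictV_def)
  then show ?thesis
    using ring_hom_on_evaluation[OF \<open>a \<in> V\<close>] extension_is_evaluation
    by (intro conjI allI impI ballI) (blast, metis)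
qed

end
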